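(* There exists $n_0$ such that for all $n\ge n_0$, $\mathrm{ex}(n,P_4,K_4)=\mathcal{N}(P_4,T_3(n))$; that is, $P_4$ is $4$-Tur\'an-good.
   Context: $P_4$ is the path on $4$ vertices. $T_3(n)$ is the complete $3$-partite graph on $n$ vertices with part sizes $\lfloor n/3\rfloor$ or $\lceil n/3\rceil$. For graphs $H,G$, $\mathcal{N}(H,G)$ is the number of subgraphs of $G$ isomorphic to $H$, and $\mathrm{ex}(n,H,F)$ is the maximum of $\mathcal{N}(H,G)$ over $F$-free graphs $G$ on $n$ vertices. A graph $H$ is $k$-Tur\'an-good if $\mathrm{ex}(n,H,K_k)=\mathcal{N}(H,T_{k-1}(n))$ for all sufficiently large $n$. *)

theory Defs
  imports Main
begin

type_synonym 'a sgraph = "'a set \<times> 'a set set"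

definition simple_graph :: "'a sgraph \<Rightarrow> bool" where
  "simple_graph G \<longleftrightarrow> finite (fst G) \<and> (\<forall>e\<in>snd G. card e = 2 \<and> e \<subseteq> fst G)"

definition graph_iso :: "'a sgraph \<Rightarrow> 'b sgraph \<Rightarrow> bool" where
  "graph_iso G H \<longleftrightarrow> (\<exists>f. bij_betw f (fst G) (fst H) \<and>
      (\<forall>u\<in>fst G. \<forall>v\<in>fst G. ({u, v} \<in> snd G \<longleftrightarrow> {f u, f v} \<in> snd H)))"

definition subgraphs :: "'a sgraph \<Rightarrow> 'a sgraph set" where
  "subgraphs G = {(W, F). W \<subseteq> fst G \<and> F \<subseteq> snd G \<and> (\<forall>e\<in>F. e \<subseteq> W)}"

definition count_copies :: "'b sgraph \<Rightarrow> 'a sgraph \<Rightarrow> nat" where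
  "count_copies H G = card {S \<in> subgraphs G. graph_iso S H}"

definition P4 :: "nat sgraph" where
  "P4 = ({0, 1, 2, 3}, {{0, 1}, {1, 2}, {2, 3}})"

definition complete_graph :: "nat \<Rightarrow> nat sgraph" where
  "complete_graph k = ({0..<k}, {e. \<exists>u v. u < k \<and> v < k \<and> u \<noteq> v \<and> e = {u, v}})"

text \<open>Tur\'an graph T_r(n) on vertex set {0..<n}: parts are residue classes mod r,
  hence of sizes floor(n/r) or ceil(n/r).\<close>
definition turan_graph :: "nat \<Rightarrow> nat \<Rightarrow> nat sgraph" where
  "turan_graph r n = ({0..<n},
     {e. \<exists>u v. u < n \<and> v < n \<and> u mod r \<noteq> v mod r \<and> e = {u, v}})"

text \<open>ex(n,H,F): max number of copies of H over F-free graphs on n vertices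
  (WLOG with vertex set {0..<n}).\<close>
definition gen_ex :: "nat \<Rightarrow> 'b sgraph \<Rightarrow> 'c sgraph \<Rightarrow> nat" where
  "gen_ex n H F = Max {count_copies H G | G :: nat sgraph.
      simple_graph G \<and> fst G = {0..<n} \<and> count_copies F G = 0}"

end

theory Submission
  imports Defs "HOL-Combinatorics.Transposition"
begin

text \<open>The proof is Zykov symmetrisation, applied to the number \<open>W\<close> of ordered paths
  \<open>abcd\<close> (twice the number of copies of \<open>P\<^sub>4\<close>).  If \<open>u\<close> and \<open>v\<close> are nonadjacent and
  \<open>G\<^sub>u\<^sub>v\<close> denotes the graph in which \<open>v\<close> is replaced by a copy of \<open>u\<close>, then
  \<open>2 W(G) \<le> W(G\<^sub>u\<^sub>v) + W(G\<^sub>v\<^sub>u)\<close>, unless \<open>u\<close> and \<open>v\<close> have single neighbours \<open>x\<close> and \<open>y\<close>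
  with \<open>x y\<close> an edge; in that case adding the edge \<open>u y\<close> creates a path and no \<open>K\<^sub>4\<close>.
  Cloning preserves \<open>K\<^sub>4\<close>-freeness, so among the \<open>K\<^sub>4\<close>-free graphs maximising \<open>W\<close> one with
  the most pairs of twins is complete multipartite, hence complete tripartite.  For parts
  of sizes \<open>x, y, z\<close> the value of \<open>W\<close> is an explicit polynomial which does not decrease
  when a vertex moves from a part to a part smaller by at least two, so the balanced
  partition, i.e. the Tur\'an graph, is optimal.  This works for every \<open>n\<close>.\<close>

section \<open>Graphs as adjacency relations\<close>

locale graph_on =
  fixes V :: "'a set" and R :: "'a \<Rightarrow> 'a \<Rightarrow> bool"
  assumes finite_vertices: "finite V"
    and adj_in_vertices: "R x y \<Longrightarrow> x \<in> V"
    and adj_sym: "R x y \<Longrightarrow> R y x"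
    and adj_irrefl: "\<not> R x x"
begin

lemma adj_in_vertices': "R x y \<Longrightarrow> y \<in> V"
  using adj_in_vertices adj_sym by blast

lemma adj_commute: "R x y \<longleftrightarrow> R y x"
  using adj_sym by blast

end

definition K4_free :: "('a \<Rightarrow> 'a \<Rightarrow> bool) \<Rightarrow> bool" where
  "K4_free R \<longleftrightarrow> \<not> (\<exists>a b c d. R a b \<and> R a c \<and> R a d \<and> R b c \<and> R b d \<and> R c d)"

definition nbhd :: "('a \<Rightarrow> 'a \<Rightarrow> bool) \<Rightarrow> 'a \<Rightarrow> 'a set" where
  "nbhd R x = {y. R x y}"

definition edges_between :: "('a \<Rightarrow> 'a \<Rightarrow> bool) \<Rightarrow> 'a set \<Rightarrow> 'a set \<Rightarrow> nat" where
  "edges_between R X Y = card {(x, y) \<in> X \<times> Y. R x y}"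

lemma K4_free_extend:
  assumes "K4_free R" and "\<And>a. \<not> S a a" and "\<And>a b. S a b \<Longrightarrow> S b a"
    and "\<And>a b. a \<noteq> w \<Longrightarrow> b \<noteq> w \<Longrightarrow> S a b \<Longrightarrow> R a b" and "\<And>z. S w z \<Longrightarrow> z \<in> {x, y}"
  shows "K4_free S"
  unfolding K4_free_def
proof
  assume "\<exists>a b c d. S a b \<and> S a c \<and> S a d \<and> S b c \<and> S b d \<and> S c d"
  then obtain a b c d where K: "S a b" "S a c" "S a d" "S b c" "S b d" "S c d"
    by blast
  show False
  proof (cases "w \<in> {a, b, c, d}")
    case False
    then have "R a b" "R a c" "R a d" "R b c" "R b d" "R c d"
      using K assms(4) by auto
    then show False
      using assms(1) unfolding K4_free_def by blast
  next
    case True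
    have "{a, b, c, d} - {w} \<subseteq> {x, y}"
      using True K assms(3,5) by auto
    moreover have "card ({a, b, c, d} - {w}) = 3"
      using True K assms(2) by (auto simp: card_insert_if)
    ultimately have "3 \<le> card {x, y}"
      using card_mono[of "{x, y}" "{a, b, c, d} - {w}"] by simp
    moreover have "card {x, y} \<le> 2"
      by (cases "x = y") simp_all
    ultimately show False
      by linarith
  qed
qed

lemma card_pairs_neq:
  assumes "finite X" and "finite Y"
  shows "card {(x, y) \<in> X \<times> Y. x \<noteq> y} + card (X \<inter> Y) = card X * card Y"
proof -
  let ?N = "{(x, y) \<in> X \<times> Y. x \<noteq> y}" and ?D = "(\<lambda>x. (x, x)) ` (X \<inter> Y)"
  have "card (?N \<union> ?D) = card ?N + card ?D"
    using assms by (intro card_Un_disjoint) (auto intro: finite_subset[of _ "X \<times> Y"])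
  moreover have "?N \<union> ?D = X \<times> Y"
    by auto
  moreover have "card ?D = card (X \<inter> Y)"
    by (rule card_image) (auto simp: inj_on_def)
  ultimately show ?thesis
    by (simp add: card_cartesian_product)
qed

lemma edges_between_le: "finite X \<Longrightarrow> finite Y \<Longrightarrow> edges_between R X Y \<le> card X * card Y"
  unfolding edges_between_def card_cartesian_product[symmetric] by (intro card_mono) auto

lemma edges_between_Un_left:
  assumes "finite X1" "finite X2" "finite Y" "X1 \<inter> X2 = {}"
  shows "edges_between R (X1 \<union> X2) Y = edges_between R X1 Y + edges_between R X2 Y"
proof -
  have "{(x, y) \<in> (X1 \<union> X2) \<times> Y. R x y} = {(x, y) \<in> X1 \<times> Y. R x y} \<union> {(x, y) \<in> X2 \<times> Y. R x y}"
    by auto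
  with assms show ?thesis
    unfolding edges_between_def
    by (simp add: card_Un_disjoint rev_finite_subset[OF finite_cartesian_product] subset_iff
        disjoint_iff)
qed

context graph_on
begin

lemma nbhd_subset: "nbhd R x \<subseteq> V"
  unfolding nbhd_def using adj_in_vertices' by blast

lemma finite_nbhd [simp]: "finite (nbhd R x)"
  using finite_subset[OF nbhd_subset finite_vertices] .

lemma edges_between_commute: "edges_between R X Y = edges_between R Y X"
proof -
  have "{(x, y) \<in> Y \<times> X. R x y} = prod.swap ` {(x, y) \<in> X \<times> Y. R x y}"
    using adj_sym by auto
  then show ?thesis
    unfolding edges_between_def by (simp add: card_image)
qed

lemma edges_between_Un_right:
  assumes "finite Y1" "finite Y2" "finite X" "Y1 \<inter> Y2 = {}"
  shows "edges_between R X (Y1 \<union> Y2) = edges_between R X Y1 + edges_between R X Y2"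
proof -
  have "edges_between R X (Y1 \<union> Y2) = edges_between R (Y1 \<union> Y2) X"
    by (rule edges_between_commute)
  also have "\<dots> = edges_between R Y1 X + edges_between R Y2 X"
    by (rule edges_between_Un_left[OF assms])
  finally show ?thesis
    using edges_between_commute[of Y1 X] edges_between_commute[of Y2 X] by linarith
qed

end

section \<open>Ordered paths on four vertices\<close>

definition paths4 :: "('a \<Rightarrow> 'a \<Rightarrow> bool) \<Rightarrow> ('a \<times> 'a \<times> 'a \<times> 'a) set" where
  "paths4 R = {(a, b, c, d). R a b \<and> R b c \<and> R c d \<and> a \<noteq> c \<and> b \<noteq> d \<and> a \<noteq> d}"

definition path_count :: "('a \<Rightarrow> 'a \<Rightarrow> bool) \<Rightarrow> nat" where
  "path_count R = card (paths4 R)"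

definition verts4 :: "'a \<times> 'a \<times> 'a \<times> 'a \<Rightarrow> 'a set" where
  "verts4 = (\<lambda>(a, b, c, d). {a, b, c, d})"

definition map4 :: "('a \<Rightarrow> 'b) \<Rightarrow> 'a \<times> 'a \<times> 'a \<times> 'a \<Rightarrow> 'b \<times> 'b \<times> 'b \<times> 'b" where
  "map4 f = (\<lambda>(a, b, c, d). (f a, f b, f c, f d))"

definition middle_edge :: "'a \<times> 'a \<times> 'a \<times> 'a \<Rightarrow> 'a \<times> 'a" where
  "middle_edge = (\<lambda>(a, b, c, d). (b, c))"

lemma paths4_mono: "(\<And>x y. R x y \<Longrightarrow> S x y) \<Longrightarrow> paths4 R \<subseteq> paths4 S"
  unfolding paths4_def by auto

lemma paths4_cong:
  assumes "verts4 t \<subseteq> U" and "\<And>x y. x \<in> U \<Longrightarrow> y \<in> U \<Longrightarrow> R x y = S x y"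
  shows "t \<in> paths4 R \<longleftrightarrow> t \<in> paths4 S"
  using assms unfolding paths4_def verts4_def by auto

lemma paths4_comp:
  assumes "inj f"
  shows "paths4 (\<lambda>x y. R (f x) (f y)) = map4 f -` paths4 R"
  using assms unfolding paths4_def map4_def inj_def by auto

lemma verts4_map4: "verts4 (map4 f t) = f ` verts4 t"
  unfolding verts4_def map4_def by (cases t) auto

context graph_on
begin

lemma paths4_subset: "paths4 R \<subseteq> V \<times> V \<times> V \<times> V"
  unfolding paths4_def using adj_in_vertices adj_in_vertices' by blast

lemma finite_paths4 [simp]: "finite (paths4 R)"
  using finite_subset[OF paths4_subset] finite_vertices by blast

lemma path_count_le: "path_count R \<le> card (V \<times> V \<times> V \<times> V)"
  unfolding path_count_def using paths4_subset finite_vertices by (intro card_mono) auto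

lemma card_paths_with_middle_edge:
  assumes "R b c"
  shows "int (card {t \<in> paths4 R. middle_edge t = (b, c)})
    = (int (card (nbhd R b)) - 1) * (int (card (nbhd R c)) - 1) - int (card (nbhd R b \<inter> nbhd R c))"
proof -
  define X Y where "X = nbhd R b - {c}" and "Y = nbhd R c - {b}"
  have "{t \<in> paths4 R. middle_edge t = (b, c)} = (\<lambda>(a, d). (a, b, c, d)) ` {(a, d) \<in> X \<times> Y. a \<noteq> d}"
    using assms adj_commute unfolding X_def Y_def paths4_def middle_edge_def nbhd_def by auto
  then have "card {t \<in> paths4 R. middle_edge t = (b, c)} = card {(a, d) \<in> X \<times> Y. a \<noteq> d}"
    by (simp add: card_image inj_on_def)
  moreover have "finite X" "finite Y"
    unfolding X_def Y_def by simp_all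
  then have "int (card {(a, d) \<in> X \<times> Y. a \<noteq> d}) + int (card (X \<inter> Y)) = int (card X) * int (card Y)"
    using arg_cong[OF card_pairs_neq, of X Y int] by simp
  ultimately have "int (card {t \<in> paths4 R. middle_edge t = (b, c)})
      = int (card X) * int (card Y) - int (card (X \<inter> Y))"
    by linarith
  moreover have "X \<inter> Y = nbhd R b \<inter> nbhd R c"
    unfolding X_def Y_def nbhd_def using adj_irrefl by auto
  moreover have cb: "c \<in> nbhd R b" "b \<in> nbhd R c"
    using assms adj_commute by (auto simp: nbhd_def)
  then have "card (nbhd R b) > 0" "card (nbhd R c) > 0"
    by (auto simp: card_gt_0_iff)
  with cb have "int (card X) = int (card (nbhd R b)) - 1" and "int (card Y) = int (card (nbhd R c)) - 1"
    unfolding X_def Y_def by (simp_all add: of_nat_diff)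
  ultimately show ?thesis
    by simp
qed

lemma path_count_sum_edges:
  "int (path_count R) = (\<Sum>b\<in>V. \<Sum>c\<in>V. if R b c
     then (int (card (nbhd R b)) - 1) * (int (card (nbhd R c)) - 1) - int (card (nbhd R b \<inter> nbhd R c))
     else 0)"
proof -
  have no_edge: "{t \<in> paths4 R. middle_edge t = (b, c)} = {}" if "\<not> R b c" for b c
    using that unfolding paths4_def middle_edge_def by auto
  have "middle_edge ` paths4 R \<subseteq> V \<times> V"
    using paths4_subset unfolding middle_edge_def by auto
  then have "path_count R = (\<Sum>e\<in>V \<times> V. card {t \<in> paths4 R. middle_edge t = e})"
    using sum_fun_comp[OF finite_paths4 _, of "V \<times> V" middle_edge "\<lambda>_. 1 :: nat"] finite_vertices
    unfolding path_count_def card_eq_sum[of "paths4 R"] by simp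
  also have "\<dots> = (\<Sum>b\<in>V. \<Sum>c\<in>V. card {t \<in> paths4 R. middle_edge t = (b, c)})"
    by (simp add: sum.cartesian_product)
  finally have "int (path_count R) = (\<Sum>b\<in>V. \<Sum>c\<in>V. int (card {t \<in> paths4 R. middle_edge t = (b, c)}))"
    by simp
  also have "\<dots> = (\<Sum>b\<in>V. \<Sum>c\<in>V. if R b c
     then (int (card (nbhd R b)) - 1) * (int (card (nbhd R c)) - 1) - int (card (nbhd R b \<inter> nbhd R c))
     else 0)"
    by (intro sum.cong refl) (simp add: card_paths_with_middle_edge no_edge)
  finally show ?thesis .
qed

end

definition paths_avoiding :: "('a \<Rightarrow> 'a \<Rightarrow> bool) \<Rightarrow> 'a \<Rightarrow> 'a \<Rightarrow> ('a \<times> 'a \<times> 'a \<times> 'a) set" where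
  "paths_avoiding R u v = {t \<in> paths4 R. u \<notin> verts4 t \<and> v \<notin> verts4 t}"

definition paths_only_through :: "('a \<Rightarrow> 'a \<Rightarrow> bool) \<Rightarrow> 'a \<Rightarrow> 'a \<Rightarrow> ('a \<times> 'a \<times> 'a \<times> 'a) set" where
  "paths_only_through R u v = {t \<in> paths4 R. u \<in> verts4 t \<and> v \<notin> verts4 t}"

definition paths_through_both :: "('a \<Rightarrow> 'a \<Rightarrow> bool) \<Rightarrow> 'a \<Rightarrow> 'a \<Rightarrow> ('a \<times> 'a \<times> 'a \<times> 'a) set" where
  "paths_through_both R u v = {t \<in> paths4 R. u \<in> verts4 t \<and> v \<in> verts4 t}"

context graph_on
begin

lemma path_count_split:
  "path_count R = card (paths_avoiding R u v) + card (paths_only_through R u v)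
     + card (paths_only_through R v u) + card (paths_through_both R u v)"
proof -
  let ?N = "paths_avoiding R u v" and ?U = "paths_only_through R u v"
    and ?V = "paths_only_through R v u" and ?B = "paths_through_both R u v"
  note defs = paths_avoiding_def paths_only_through_def paths_through_both_def
  have "paths4 R = ?N \<union> ?U \<union> ?V \<union> ?B"
    unfolding defs by blast
  moreover have "finite ?N" "finite ?U" "finite ?V" "finite ?B"
    unfolding defs by simp_all
  moreover have "(?N \<union> ?U \<union> ?V) \<inter> ?B = {}" "(?N \<union> ?U) \<inter> ?V = {}" "?N \<inter> ?U = {}"
    unfolding defs by blast+
  ultimately show ?thesis
    unfolding path_count_def by (simp add: card_Un_disjoint)
qed

text \<open>For nonadjacent \<open>u\<close> and \<open>v\<close>, a path through both has them at positions 1 and 3,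
  2 and 4, or 1 and 4, in either order.\<close>

lemma card_paths_through_both:
  assumes "u \<noteq> v" "\<not> R u v"
  defines "A \<equiv> nbhd R u" and "B \<equiv> nbhd R v"
  shows "card (paths_through_both R u v) = 2 * card (A \<inter> B) * (card A - 1)
     + 2 * card (A \<inter> B) * (card B - 1) + 2 * edges_between R A B"
proof -
  define C where "C = A \<inter> B"
  define XA where "XA = {(x, y) \<in> C \<times> A. x \<noteq> y}"
  define XB where "XB = {(x, y) \<in> C \<times> B. x \<noteq> y}"
  define E where "E = {(x, y) \<in> A \<times> B. R x y}"
  have uv: "\<not> R v u" and A: "x \<in> A \<longleftrightarrow> R u x" and B: "x \<in> B \<longleftrightarrow> R v x" for x
    using assms adj_commute unfolding A_def B_def nbhd_def by auto
  let ?f1 = "\<lambda>(x, y). (u, x, v, y)" and ?f2 = "\<lambda>(x, y). (v, x, u, y)"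
  let ?f3 = "\<lambda>(x, y). (y, v, x, u)" and ?f4 = "\<lambda>(x, y). (y, u, x, v)"
  let ?f5 = "\<lambda>(x, y). (u, x, y, v)" and ?f6 = "\<lambda>(x, y). (v, y, x, u)"
  have split: "paths_through_both R u v = ?f1 ` XB \<union> ?f2 ` XA \<union> ?f3 ` XB \<union> ?f4 ` XA
      \<union> ?f5 ` E \<union> ?f6 ` E"
    using assms(1) uv adj_irrefl
    unfolding paths_through_both_def paths4_def verts4_def XA_def XB_def E_def C_def
    by (auto simp: A B image_iff adj_commute)
  have "finite XA" "finite XB" "finite E"
    unfolding XA_def XB_def E_def C_def A_def B_def
    by (auto intro: rev_finite_subset[OF finite_cartesian_product[OF finite_nbhd finite_nbhd]])
  moreover have "card (?f1 ` XB) = card XB" "card (?f2 ` XA) = card XA" "card (?f3 ` XB) = card XB"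
    "card (?f4 ` XA) = card XA" "card (?f5 ` E) = card E" "card (?f6 ` E) = card E"
    by (auto intro!: card_image simp: inj_on_def)
  moreover have "card XA = card C * (card A - 1)" "card XB = card C * (card B - 1)"
    using card_pairs_neq[of C A] card_pairs_neq[of C B] unfolding XA_def XB_def C_def A_def B_def
    by (simp_all add: Int_absorb2 diff_mult_distrib2)
  moreover have "card E = edges_between R A B"
    unfolding E_def edges_between_def ..
  moreover have "(?f1 ` XB \<union> ?f2 ` XA \<union> ?f3 ` XB \<union> ?f4 ` XA \<union> ?f5 ` E) \<inter> ?f6 ` E = {}"
    "(?f1 ` XB \<union> ?f2 ` XA \<union> ?f3 ` XB \<union> ?f4 ` XA) \<inter> ?f5 ` E = {}"
    "(?f1 ` XB \<union> ?f2 ` XA \<union> ?f3 ` XB) \<inter> ?f4 ` XA = {}"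
    "(?f1 ` XB \<union> ?f2 ` XA) \<inter> ?f3 ` XB = {}" "?f1 ` XB \<inter> ?f2 ` XA = {}"
    using assms(1) uv adj_irrefl unfolding XA_def XB_def E_def C_def by (auto simp: A B)
  ultimately show ?thesis
    unfolding split C_def by (simp add: card_Un_disjoint)
qed

end

section \<open>Zykov symmetrisation\<close>

lemma mult_le_pred_squares:
  fixes a b :: nat
  assumes "\<not> (a = 1 \<and> b = 1)"
  shows "a * b \<le> a * (a - 1) + b * (b - 1)"
proof -
  have sq: "1 \<le> x\<^sup>2" if "x \<noteq> 0" for x :: int
    using that by (simp add: int_one_le_iff_zero_less)
  have "2 \<le> (int a - int b)\<^sup>2 + (int a - 1)\<^sup>2 + (int b - 1)\<^sup>2"
    using assms sq[of "int a - int b"] sq[of "int a - 1"] sq[of "int b - 1"]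
    by (cases "a = b") (auto, smt (verit) zero_le_power2)
  then have "int a * int b \<le> int a * (int a - 1) + int b * (int b - 1)"
    by (simp add: power2_eq_square algebra_simps)
  moreover have "int (x * (x - 1)) = int x * (int x - 1)" for x
    by (cases x) (auto simp: algebra_simps)
  ultimately show ?thesis
    by (metis of_nat_add of_nat_le_iff of_nat_mult)
qed

lemma le_unless_degenerate:
  fixes a b c e :: nat
  assumes "e \<le> a * b" and "\<not> (c = 0 \<and> a = 1 \<and> b = 1 \<and> e > 0)"
  shows "e \<le> c * (a + b) + a * (a - 1) + b * (b - 1)"
proof (cases "c = 0")
  case True
  with assms mult_le_pred_squares[of a b] show ?thesis
    by (cases "a = 1 \<and> b = 1") auto
next
  case False
  have "a * b \<le> a * a + b * b"
    by (metis le_add1 le_add2 le_cases mult_le_mono1 mult_le_mono2 order_trans)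
  also have "\<dots> = a + a * (a - 1) + b + b * (b - 1)"
    by (cases a; cases b) auto
  also have "\<dots> \<le> c * (a + b) + a * (a - 1) + b * (b - 1)"
    using False by simp
  finally show ?thesis
    using assms(1) by linarith
qed

lemma mult_pred_split:
  fixes a c :: nat
  shows "(c + a) * (c + a - 1) = c * (c + a - 1) + c * a + a * (a - 1)"
  by (cases a) (simp_all add: algebra_simps)

definition clone :: "'a \<Rightarrow> 'a \<Rightarrow> ('a \<Rightarrow> 'a \<Rightarrow> bool) \<Rightarrow> 'a \<Rightarrow> 'a \<Rightarrow> bool" where
  "clone u v R = (\<lambda>x y. R (if x = v then u else x) (if y = v then u else y))"

definition twins :: "('a \<Rightarrow> 'a \<Rightarrow> bool) \<Rightarrow> 'a \<Rightarrow> 'a \<Rightarrow> bool" where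
  "twins R x y \<longleftrightarrow> (\<forall>z. R x z = R y z)"

definition twin_class :: "'a set \<Rightarrow> ('a \<Rightarrow> 'a \<Rightarrow> bool) \<Rightarrow> 'a \<Rightarrow> 'a set" where
  "twin_class V R x = {y \<in> V. twins R x y}"

definition twin_pairs :: "'a set \<Rightarrow> ('a \<Rightarrow> 'a \<Rightarrow> bool) \<Rightarrow> ('a \<times> 'a) set" where
  "twin_pairs V R = {(x, y) \<in> V \<times> V. twins R x y}"

definition complete_multipartite :: "'a set \<Rightarrow> ('a \<Rightarrow> 'a \<Rightarrow> bool) \<Rightarrow> bool" where
  "complete_multipartite V R \<longleftrightarrow> (\<forall>x\<in>V. \<forall>y\<in>V. \<not> R x y \<longrightarrow> twins R x y)"

lemma twins_sym: "twins R x y \<Longrightarrow> twins R y x"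
  unfolding twins_def by auto

lemma twin_pairs_subset: "twin_pairs V R \<subseteq> V \<times> V"
  unfolding twin_pairs_def by auto

lemma finite_twin_pairs: "finite V \<Longrightarrow> finite (twin_pairs V R)"
  by (rule finite_subset[OF twin_pairs_subset]) simp

lemma card_pairs_containing:
  assumes "finite S" and "v \<in> S"
  shows "card ({v} \<times> S \<union> S \<times> {v}) = 2 * card S - 1"
proof -
  have "({v} \<times> S) \<inter> (S \<times> {v}) = {(v, v)}"
    using assms(2) by auto
  then show ?thesis
    using card_Un_Int[of "{v} \<times> S" "S \<times> {v}"] assms(1) by (simp add: card_cartesian_product)
qed

locale nonadjacent_pair = graph_on +
  fixes u v
  assumes u_in: "u \<in> V" and v_in: "v \<in> V" and u_neq_v: "u \<noteq> v" and nonadj: "\<not> R u v"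
begin

lemma nonadj': "\<not> R v u"
  using nonadj adj_commute by blast

lemma graph_on_clone: "graph_on V (clone u v R)"
  by unfold_locales
    (auto simp: clone_def finite_vertices u_in v_in adj_irrefl adj_commute dest: adj_in_vertices
      split: if_splits)

lemma K4_free_clone: "K4_free R \<Longrightarrow> K4_free (clone u v R)"
  unfolding K4_free_def clone_def by fast

lemma paths_avoiding_clone: "paths_avoiding (clone u v R) u v = paths_avoiding R u v"
  unfolding paths_avoiding_def paths4_def verts4_def clone_def by auto

lemma paths_only_through_clone: "paths_only_through (clone u v R) u v = paths_only_through R u v"
  unfolding paths_only_through_def paths4_def verts4_def clone_def by auto

lemma card_paths_only_through_clone:
  "card (paths_only_through (clone u v R) v u) = card (paths_only_through R u v)"
proof -
  let ?\<sigma> = "Transposition.transpose u v"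
  have "t \<in> paths_only_through (clone u v R) v u \<longleftrightarrow> map4 ?\<sigma> t \<in> paths_only_through R u v"
    for t
  proof (cases "u \<in> verts4 t")
    case False
    \<comment> \<open>away from \<open>u\<close>, the clone is \<open>R\<close> relabelled by the transposition of \<open>u\<close> and \<open>v\<close>\<close>
    then have "t \<in> paths4 (clone u v R) \<longleftrightarrow> t \<in> paths4 (\<lambda>x y. R (?\<sigma> x) (?\<sigma> y))"
      by (intro paths4_cong[of t "- {u}"]) (auto simp: clone_def transpose_def)
    with False show ?thesis
      unfolding paths_only_through_def paths4_comp[OF inj_transpose]
      by (simp add: verts4_map4 in_transpose_image_iff)
  qed (simp add: paths_only_through_def verts4_map4 in_transpose_image_iff)
  then have "paths_only_through (clone u v R) v u = map4 ?\<sigma> -` paths_only_through R u v"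
    by blast
  moreover have "map4 ?\<sigma> (map4 ?\<sigma> t) = t" for t
    by (cases t) (simp add: map4_def)
  then have "inj (map4 ?\<sigma>)" "surj (map4 ?\<sigma>)"
    by (rule inj_on_inverseI[where g = "map4 ?\<sigma>"], rule surjI[where f = "map4 ?\<sigma>"])
  ultimately show ?thesis
    by (simp add: card_vimage_inj)
qed

lemma nbhd_clone: "nbhd (clone u v R) u = nbhd R u" "nbhd (clone u v R) v = nbhd R u"
  unfolding nbhd_def clone_def using u_neq_v nonadj adj_irrefl by auto

lemma edges_between_clone:
  "edges_between (clone u v R) (nbhd R u) (nbhd R u) = edges_between R (nbhd R u) (nbhd R u)"
proof -
  have "v \<notin> nbhd R u"
    using nonadj unfolding nbhd_def by auto
  then have "{(x, y) \<in> nbhd R u \<times> nbhd R u. clone u v R x y}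
      = {(x, y) \<in> nbhd R u \<times> nbhd R u. R x y}"
    unfolding clone_def by (auto split: if_splits)
  then show ?thesis
    unfolding edges_between_def by simp
qed

lemma path_count_clone:
  "path_count (clone u v R) = card (paths_avoiding R u v) + 2 * card (paths_only_through R u v)
     + 4 * card (nbhd R u) * (card (nbhd R u) - 1) + 2 * edges_between R (nbhd R u) (nbhd R u)"
proof -
  interpret clone: graph_on V "clone u v R"
    by (rule graph_on_clone)
  have "\<not> clone u v R u v"
    unfolding clone_def using u_neq_v adj_irrefl by auto
  then show ?thesis
    using clone.path_count_split[of u v] clone.card_paths_through_both[OF u_neq_v]
    by (simp add: paths_avoiding_clone paths_only_through_clone card_paths_only_through_clone
        nbhd_clone edges_between_clone)
qed

lemma edges_between_exclusive_nbhds_le: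
  assumes "\<nexists>x y. nbhd R u = {x} \<and> nbhd R v = {y} \<and> R x y"
  defines "A \<equiv> nbhd R u - nbhd R v" and "B \<equiv> nbhd R v - nbhd R u"
    and "C \<equiv> nbhd R u \<inter> nbhd R v"
  shows "edges_between R A B
    \<le> card C * card A + card C * card B + card A * (card A - 1) + card B * (card B - 1)"
proof -
  have fin: "finite A" "finite B" "finite C"
    unfolding A_def B_def C_def by simp_all
  have "\<not> (card C = 0 \<and> card A = 1 \<and> card B = 1 \<and> edges_between R A B > 0)"
  proof
    assume deg: "card C = 0 \<and> card A = 1 \<and> card B = 1 \<and> edges_between R A B > 0"
    then have "C = {}"
      using fin(3) by simp
    then have "nbhd R u = A" "nbhd R v = B"
      unfolding A_def B_def C_def by auto
    moreover obtain x y where "A = {x}" "B = {y}"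
      using deg by (auto simp: card_1_singleton_iff)
    ultimately show False
      using deg assms(1) unfolding edges_between_def by (auto simp: card_gt_0_iff split: if_splits)
  qed
  then show ?thesis
    using le_unless_degenerate[OF edges_between_le[OF fin(1,2)]] by (simp add: add_mult_distrib2)
qed

lemma path_count_le_clones:
  assumes "\<nexists>x y. nbhd R u = {x} \<and> nbhd R v = {y} \<and> R x y"
  shows "2 * path_count R \<le> path_count (clone u v R) + path_count (clone v u R)"
proof -
  interpret swapped: nonadjacent_pair V R v u
    by unfold_locales (use v_in u_in u_neq_v nonadj' in auto)
  define A B where "A = nbhd R u" and "B = nbhd R v"
  define C A' B' where "C = A \<inter> B" and "A' = A - B" and "B' = B - A"
  define e where "e = edges_between R"
  define qA qB where "qA = card C * (card A - 1)" and "qB = card C * (card B - 1)"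
  define sA sB where "sA = card A' * (card A' - 1)" and "sB = card B' * (card B' - 1)"
  have fin: "finite C" "finite A'" "finite B'"
    unfolding C_def A'_def B'_def A_def B_def by auto
  have A: "A = C \<union> A'" "C \<inter> A' = {}" and B: "B = C \<union> B'" "C \<inter> B' = {}"
    unfolding C_def A'_def B'_def by auto
  have e_A: "e A A = e C C + 2 * e C A' + e A' A'"
    using A fin edges_between_commute[of A' C]
    by (simp add: e_def edges_between_Un_left edges_between_Un_right)
  have e_B: "e B B = e C C + 2 * e C B' + e B' B'"
    using B fin edges_between_commute[of B' C]
    by (simp add: e_def edges_between_Un_left edges_between_Un_right)
  have e_AB: "e A B = e C C + e C B' + e C A' + e A' B'"
    using A B fin edges_between_commute[of A' C]
    by (simp add: e_def edges_between_Un_left edges_between_Un_right Int_Un_distrib2 Un_Int_distrib)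
  have "card A * (card A - 1) = qA + card C * card A' + sA"
    and "card B * (card B - 1) = qB + card C * card B' + sB"
    using mult_pred_split[of "card C" "card A'"] mult_pred_split[of "card C" "card B'"] A B fin
    unfolding qA_def qB_def sA_def sB_def by (simp_all add: card_Un_disjoint)
  then have "path_count (clone u v R) + path_count (clone v u R)
      = 2 * card (paths_avoiding R u v) + 2 * card (paths_only_through R u v)
        + 2 * card (paths_only_through R v u) + 4 * (qA + card C * card A' + sA)
        + 4 * (qB + card C * card B' + sB) + 2 * e A A + 2 * e B B"
    using path_count_clone swapped.path_count_clone paths_avoiding_def
    unfolding A_def B_def e_def by (simp add: paths_avoiding_def conj_commute)
  moreover have "path_count R = card (paths_avoiding R u v) + card (paths_only_through R u v)
      + card (paths_only_through R v u) + 2 * qA + 2 * qB + 2 * e A B"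
    using path_count_split[of u v] card_paths_through_both[OF u_neq_v nonadj]
    unfolding A_def B_def C_def e_def qA_def qB_def by simp
  moreover have "e A' B' \<le> card C * card A' + card C * card B' + sA + sB"
    using edges_between_exclusive_nbhds_le[OF assms]
    unfolding e_def sA_def sB_def A'_def B'_def C_def A_def B_def .
  ultimately show ?thesis
    using e_A e_B e_AB by (simp add: distrib_left)
qed

lemma path_count_increase_by_edge:
  assumes "K4_free R" and "nbhd R u = {x}" and "nbhd R v = {y}" and "R x y"
  obtains S where "graph_on V S" and "K4_free S" and "path_count R < path_count S"
proof -
  define S where "S = (\<lambda>a b. R a b \<or> {a, b} = {u, y})"
  have Rux: "R u x" and Rvy: "R v y" and R_u: "R u w \<Longrightarrow> w = x" for w
    using assms(2,3) unfolding nbhd_def by auto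
  have uy: "u \<noteq> y" and xy: "x \<noteq> y"
    using Rvy nonadj' assms(4) adj_irrefl by auto
  interpret S: graph_on V S
  proof
    show "finite V"
      by (rule finite_vertices)
    show "S a b \<Longrightarrow> a \<in> V" for a b
      using u_in adj_in_vertices'[OF Rvy] unfolding S_def
      by (auto simp: doubleton_eq_iff dest: adj_in_vertices)
    show "S a b \<Longrightarrow> S b a" for a b
      unfolding S_def by (auto simp: adj_commute insert_commute)
    show "\<not> S a a" for a
      unfolding S_def using uy adj_irrefl by (auto simp: doubleton_eq_iff)
  qed
  have "K4_free S"
  proof (rule K4_free_extend[OF assms(1) S.adj_irrefl S.adj_sym])
    show "S a b \<Longrightarrow> R a b" if "a \<noteq> u" "b \<noteq> u" for a b
      using that unfolding S_def by (auto simp: doubleton_eq_iff)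
    show "S u z \<Longrightarrow> z \<in> {x, y}" for z
      unfolding S_def using R_u by (auto simp: doubleton_eq_iff)
  qed
  moreover have "paths4 R \<subset> paths4 S"
  proof
    show "paths4 R \<subseteq> paths4 S"
      by (rule paths4_mono) (simp add: S_def)
    have "x \<noteq> v" "\<not> R y u"
      using Rux nonadj R_u xy adj_commute by blast+
    then have "(v, y, u, x) \<in> paths4 S - paths4 R"
      using Rvy Rux u_neq_v uy xy unfolding paths4_def S_def by (auto simp: insert_commute)
    then show "paths4 R \<noteq> paths4 S"
      by blast
  qed
  then have "path_count R < path_count S"
    unfolding path_count_def by (simp add: psubset_card_mono)
  ultimately show ?thesis
    using S.graph_on_axioms that by blast
qed

lemma card_twin_pairs_less_clone:
  assumes "\<not> twins R u v" and "card (twin_class V R v) \<le> card (twin_class V R u)"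
  shows "card (twin_pairs V R) < card (twin_pairs V (clone u v R))"
proof -
  let ?P = "twin_pairs V R" and ?Q = "twin_pairs V (clone u v R)"
  let ?star = "\<lambda>S. {v} \<times> S \<union> S \<times> {v}"
  define T where "T = insert v (twin_class V R u)"
  define Old where "Old = ?P - ?star (twin_class V R v)"
  have fin: "finite (twin_class V R x)" "finite ?P" "finite ?Q" "finite Old" for x
    using finite_vertices finite_twin_pairs unfolding twin_class_def Old_def by auto
  have v_class: "v \<in> twin_class V R v" and "v \<notin> twin_class V R u"
    using v_in assms(1) unfolding twin_class_def twins_def by auto
  then have card_T: "card T = card (twin_class V R u) + 1"
    unfolding T_def using fin by simp
  have twins_clone: "twins (clone u v R) x y" if "x \<noteq> v" "y \<noteq> v" "twins R x y" for x y
    using that unfolding twins_def clone_def by simp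
  have twins_clone_v: "twins (clone u v R) v w" "twins (clone u v R) w v" if "w \<in> T" for w
    using that u_neq_v unfolding T_def twin_class_def twins_def clone_def by auto
  have Old: "(x, y) \<in> Old \<longleftrightarrow> (x, y) \<in> ?P \<and> x \<noteq> v \<and> y \<noteq> v" for x y
    unfolding Old_def twin_pairs_def twin_class_def by (auto dest: twins_sym)
  have "Old \<union> ?star T \<subseteq> ?Q"
    using v_in u_in twins_clone twins_clone_v
    by (auto simp: Old twin_pairs_def T_def twin_class_def)
  then have "card (Old \<union> ?star T) \<le> card ?Q"
    using fin(3) by (rule card_mono[rotated])
  moreover have "card (Old \<union> ?star T) = card Old + (2 * card T - 1)"
    using fin card_pairs_containing[of T v] Old unfolding T_def by (subst card_Un_disjoint) auto
  moreover have star: "?star (twin_class V R v) \<subseteq> ?P"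
    using v_in unfolding twin_pairs_def twin_class_def by (auto dest: twins_sym)
  then have "card ?P = card Old + (2 * card (twin_class V R v) - 1)"
    using card_pairs_containing[OF fin(1) v_class] card_mono[OF fin(2) star]
      card_Diff_subset[OF finite_subset[OF star fin(2)] star]
    unfolding Old_def by linarith
  ultimately show ?thesis
    using assms(2) card_T by linarith
qed

lemma exists_lex_larger:
  assumes "K4_free R" and "\<not> twins R u v"
  obtains S where "graph_on V S" and "K4_free S"
    and "path_count R < path_count S
      \<or> path_count R = path_count S \<and> card (twin_pairs V R) < card (twin_pairs V S)"
proof (cases "\<exists>x y. nbhd R u = {x} \<and> nbhd R v = {y} \<and> R x y")
  case True
  then show ?thesis
    using path_count_increase_by_edge[OF assms(1)] that by blast
next
  case False
  interpret swapped: nonadjacent_pair V R v u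
    by unfold_locales (use v_in u_in u_neq_v nonadj' in auto)
  have clones: "graph_on V (clone u v R)" "K4_free (clone u v R)"
    "graph_on V (clone v u R)" "K4_free (clone v u R)"
    using graph_on_clone swapped.graph_on_clone K4_free_clone swapped.K4_free_clone assms(1)
    by auto
  consider "path_count R < path_count (clone u v R)" | "path_count R < path_count (clone v u R)"
    | "path_count (clone u v R) = path_count R" "path_count (clone v u R) = path_count R"
    using path_count_le_clones[OF False] by linarith
  then show ?thesis
  proof cases
    case 3
    have "\<not> twins R v u"
      using assms(2) twins_sym[of R v u] by blast
    then show ?thesis
      using 3 clones card_twin_pairs_less_clone[OF assms(2)]
        swapped.card_twin_pairs_less_clone that
      by (metis nat_le_linear)
  qed (use clones that in blast)+
qed

end

lemma exists_complete_multipartite_maximiser: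
  assumes "finite V"
  obtains R where "graph_on V R" and "K4_free R" and "complete_multipartite V R"
    and "\<And>S. graph_on V S \<Longrightarrow> K4_free S \<Longrightarrow> path_count S \<le> path_count R"
proof -
  let ?G = "\<lambda>R. graph_on V R \<and> K4_free R"
  have "?G (\<lambda>_ _. False)"
    using assms by (simp add: graph_on_def K4_free_def)
  moreover have "\<forall>S. ?G S \<longrightarrow> path_count S < card (V \<times> V \<times> V \<times> V) + 1"
    using graph_on.path_count_le by fastforce
  ultimately obtain R0 where R0: "?G R0" "\<And>S. ?G S \<Longrightarrow> path_count S \<le> path_count R0"
    using ex_has_greatest_nat[of ?G] by metis
  let ?M = "\<lambda>R. ?G R \<and> path_count R = path_count R0"
  have "card (twin_pairs V S) \<le> card (V \<times> V)" for S
    using assms by (intro card_mono twin_pairs_subset) auto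
  then have "\<forall>S. ?M S \<longrightarrow> card (twin_pairs V S) < card (V \<times> V) + 1"
    by (simp add: less_Suc_eq_le del: card_cartesian_product)
  then obtain R where R: "?M R" "\<And>S. ?M S \<Longrightarrow> card (twin_pairs V S) \<le> card (twin_pairs V R)"
    using ex_has_greatest_nat[of ?M R0 "\<lambda>R. card (twin_pairs V R)"] R0(1) by metis
  interpret graph_on V R
    using R(1) by blast
  have "complete_multipartite V R"
    unfolding complete_multipartite_def
  proof (intro ballI impI, rule ccontr)
    fix u v
    assume uv: "u \<in> V" "v \<in> V" "\<not> R u v" "\<not> twins R u v"
    then have "u \<noteq> v"
      by (auto simp: twins_def)
    interpret nonadjacent_pair V R u v
      by unfold_locales (use uv \<open>u \<noteq> v\<close> in auto)
    obtain S where "?G S" and "path_count R < path_count S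
        \<or> path_count R = path_count S \<and> card (twin_pairs V R) < card (twin_pairs V S)"
      using exists_lex_larger[OF _ uv(4)] R(1) by blast
    then show False
      using R R0(2)[of S] by fastforce
  qed
  then show ?thesis
    using R R0(2) by (intro that) auto
qed

section \<open>Complete tripartite graphs\<close>

definition multipartite :: "'a set \<Rightarrow> ('a \<Rightarrow> 'b) \<Rightarrow> 'a \<Rightarrow> 'a \<Rightarrow> bool" where
  "multipartite V p = (\<lambda>x y. x \<in> V \<and> y \<in> V \<and> p x \<noteq> p y)"

definition part_size :: "'a set \<Rightarrow> ('a \<Rightarrow> nat) \<Rightarrow> nat \<Rightarrow> nat" where
  "part_size V p i = card {x \<in> V. p x = i}"

lemma graph_on_multipartite: "finite V \<Longrightarrow> graph_on V (multipartite V p)"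
  by unfold_locales (auto simp: multipartite_def)

lemma K4_free_tripartite:
  assumes "p ` V \<subseteq> {..<3 :: nat}"
  shows "K4_free (multipartite V p)"
  unfolding K4_free_def
proof
  assume "\<exists>a b c d. multipartite V p a b \<and> multipartite V p a c \<and> multipartite V p a d
      \<and> multipartite V p b c \<and> multipartite V p b d \<and> multipartite V p c d"
  then obtain a b c d where "a \<in> V" "b \<in> V" "c \<in> V" "d \<in> V"
    and "distinct [p a, p b, p c, p d]"
    unfolding multipartite_def by auto
  then have "card {p a, p b, p c, p d} = 4" and "{p a, p b, p c, p d} \<subseteq> {..<3}"
    using distinct_card[of "[p a, p b, p c, p d]"] assms by auto
  then show False
    using card_mono[of "{..<3}" "{p a, p b, p c, p d}"] by simp
qed

lemma (in graph_on) tripartite_colouring: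
  assumes "complete_multipartite V R" and "K4_free R"
    and "x0 \<in> V" and "\<And>y. R x0 y \<Longrightarrow> R x0 x1"
  defines "p \<equiv> \<lambda>x. if \<not> R x0 x then 0 else if \<not> R x1 x then 1 else 2 :: nat"
  shows "R = multipartite V p"
proof -
  have twins: "twins R x y" if "x \<in> V" "y \<in> V" "\<not> R x y" for x y
    using assms(1) that unfolding complete_multipartite_def by blast
  have nonadj_trans: "\<not> R x z" if "x \<in> V" "y \<in> V" "\<not> R x y" "\<not> R y z" for x y z
    using twins[OF that(1-3)] that(4) unfolding twins_def by blast
  have "p x \<noteq> p y" if Rxy: "R x y" for x y
  proof
    assume "p x = p y"
    then consider "\<not> R x0 x" "\<not> R x0 y" | "R x0 x" "R x0 y" "\<not> R x1 x" "\<not> R x1 y"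
      | "R x0 x" "R x0 y" "R x1 x" "R x1 y"
      unfolding p_def by (auto split: if_splits)
    then show False
    proof cases
      case 1
      then show False
        using nonadj_trans[of x x0 y] assms(3) Rxy adj_in_vertices adj_commute by blast
    next
      case 2
      then have "x1 \<in> V"
        using assms(4) adj_in_vertices' by blast
      with 2 show False
        using nonadj_trans[of x x1 y] Rxy adj_in_vertices adj_commute by blast
    next
      case 3
      with Rxy assms(2,4) show False
        unfolding K4_free_def by blast
    qed
  qed
  moreover have "R x y" if "x \<in> V" "y \<in> V" "p x \<noteq> p y" for x y
  proof (rule ccontr)
    assume "\<not> R x y"
    then have "R z x = R z y" for z
      using twins[of x y] that adj_commute unfolding twins_def by blast
    then have "p x = p y"
      unfolding p_def by simp
    with that show False
      by blast
  qed
  ultimately have "R x y \<longleftrightarrow> x \<in> V \<and> y \<in> V \<and> p x \<noteq> p y" for x y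
    using adj_in_vertices adj_in_vertices' by blast
  then show ?thesis
    unfolding multipartite_def by blast
qed

lemma (in graph_on) complete_multipartite_K4_free_tripartite:
  assumes "complete_multipartite V R" and "K4_free R"
  obtains p :: "'a \<Rightarrow> nat" where "p ` V \<subseteq> {..<3}" and "R = multipartite V p"
proof (cases "V = {}")
  case True
  then have "R = multipartite V (\<lambda>_. 0)"
    using adj_in_vertices by (auto simp: multipartite_def fun_eq_iff)
  with True that show ?thesis
    by blast
next
  case False
  then obtain x0 where x0: "x0 \<in> V"
    by blast
  have select: "R x0 y \<Longrightarrow> R x0 (SOME y. R x0 y)" for y
    by (rule someI)
  show ?thesis
    by (rule that[OF _ tripartite_colouring[OF assms x0 select]]) auto
qed

lemma part_sizes_sum:
  assumes "finite V" and "p ` V \<subseteq> {..<3}"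
  shows "part_size V p 0 + part_size V p 1 + part_size V p 2 = card V"
  using sum_fun_comp[OF assms(1) _ assms(2), of "\<lambda>_. 1 :: nat"]
  unfolding part_size_def by (simp add: eval_nat_numeral)

lemma card_nbhd_multipartite:
  assumes "finite V" and "b \<in> V"
  shows "int (card (nbhd (multipartite V p) b)) = int (card V) - int (part_size V p (p b))"
proof -
  have "nbhd (multipartite V p) b = V - {x \<in> V. p x = p b}"
    using assms(2) unfolding nbhd_def multipartite_def by auto
  then show ?thesis
    unfolding part_size_def using assms(1) by (simp add: card_Diff_subset of_nat_diff card_mono)
qed

lemma neq_both_iff_third:
  fixes a i j :: nat
  assumes "a < 3" "i < 3" "j < 3" "i \<noteq> j"
  shows "a \<noteq> i \<and> a \<noteq> j \<longleftrightarrow> a = 3 - i - j"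
proof -
  have "a \<in> {0, 1, 2}" "i \<in> {0, 1, 2}" "j \<in> {0, 1, 2}"
    using assms by auto
  then show ?thesis
    using assms(4) by (elim insertE emptyE) simp_all
qed

lemma common_nbhd_tripartite:
  fixes p :: "'a \<Rightarrow> nat"
  assumes "p ` V \<subseteq> {..<3}" and "b \<in> V" "c \<in> V" "p b \<noteq> p c"
  shows "nbhd (multipartite V p) b \<inter> nbhd (multipartite V p) c = {x \<in> V. p x = 3 - p b - p c}"
proof -
  have "p x \<noteq> p b \<and> p x \<noteq> p c \<longleftrightarrow> p x = 3 - p b - p c" if "x \<in> V" for x
    using that assms by (intro neq_both_iff_third) auto
  moreover have "x \<in> nbhd (multipartite V p) b \<inter> nbhd (multipartite V p) c
      \<longleftrightarrow> x \<in> V \<and> p x \<noteq> p b \<and> p x \<noteq> p c" for x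
    using assms(2,3) unfolding nbhd_def multipartite_def by auto
  ultimately show ?thesis
    by blast
qed

text \<open>The summand for parts of sizes \<open>x\<close> and \<open>y\<close> counts the ordered paths whose middle edge
  goes from the first part to the second: its ends have \<open>y + z\<close> and \<open>x + z\<close> neighbours and
  \<open>z\<close> common ones.\<close>

definition tripartite_path_count :: "int \<Rightarrow> int \<Rightarrow> int \<Rightarrow> int" where
  "tripartite_path_count x y z =
     x * y * ((y + z - 1) * (x + z - 1) - z) + x * z * ((y + z - 1) * (x + y - 1) - y)
   + y * x * ((x + z - 1) * (y + z - 1) - z) + y * z * ((x + z - 1) * (x + y - 1) - x)
   + z * x * ((x + y - 1) * (y + z - 1) - y) + z * y * ((x + y - 1) * (x + z - 1) - x)"

lemma path_count_multipartite:
  assumes "finite V" and parts: "p ` V \<subseteq> {..<3}"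
  shows "int (path_count (multipartite V p))
    = tripartite_path_count (int (part_size V p 0)) (int (part_size V p 1)) (int (part_size V p 2))"
proof -
  let ?R = "multipartite V p"
  interpret graph_on V ?R
    using assms(1) by (rule graph_on_multipartite)
  define s where "s i = int (part_size V p i)" for i
  define n where "n = int (card V)"
  have sum_parts: "(\<Sum>x\<in>V. f (p x)) = (\<Sum>i<3. s i * f i)" for f :: "nat \<Rightarrow> int"
    using sum_fun_comp[OF assms(1) _ parts] unfolding s_def part_size_def by simp
  have n: "n = s 0 + s 1 + s 2"
    using part_sizes_sum[OF assms] unfolding n_def s_def by linarith
  define H where "H i j = (if i \<noteq> j then (n - s i - 1) * (n - s j - 1) - s (3 - i - j) else 0)"
    for i j
  have "int (path_count ?R) = (\<Sum>b\<in>V. \<Sum>c\<in>V. H (p b) (p c))"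
    unfolding path_count_sum_edges
  proof (intro sum.cong refl)
    fix b c
    assume "b \<in> V" "c \<in> V"
    then show "(if ?R b c then (int (card (nbhd ?R b)) - 1) * (int (card (nbhd ?R c)) - 1)
        - int (card (nbhd ?R b \<inter> nbhd ?R c)) else 0) = H (p b) (p c)"
      using card_nbhd_multipartite[OF assms(1)] common_nbhd_tripartite[OF parts]
      unfolding H_def n_def s_def part_size_def by (simp add: multipartite_def)
  qed
  also have "\<dots> = (\<Sum>b\<in>V. \<Sum>j<3. s j * H (p b) j)"
    by (simp add: sum_parts)
  also have "\<dots> = (\<Sum>i<3. s i * (\<Sum>j<3. s j * H i j))"
    by (rule sum_parts)
  also have "\<dots> = tripartite_path_count (s 0) (s 1) (s 2)"
    unfolding H_def n tripartite_path_count_def by (simp add: eval_nat_numeral algebra_simps)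
  finally show ?thesis
    unfolding s_def .
qed

lemma tripartite_path_count_swap:
  "tripartite_path_count x y z = tripartite_path_count y x z"
  "tripartite_path_count x y z = tripartite_path_count x z y"
  unfolding tripartite_path_count_def by (simp_all add: algebra_simps)

text \<open>With \<open>e = x - y - 2\<close>, the gain is a polynomial in \<open>e, y, z\<close> with nonnegative
  coefficients plus \<open>2 (z\<^sup>2 - z)\<close>.\<close>

lemma tripartite_path_count_move:
  fixes x y z :: int
  assumes "y + 2 \<le> x" and "0 \<le> y" and "0 \<le> z"
  shows "tripartite_path_count x y z \<le> tripartite_path_count (x - 1) (y + 1) z"
proof -
  define e where "e = x - y - 2"
  have e: "0 \<le> e" and x: "x = y + 2 + e"
    using assms(1) unfolding e_def by simp_all
  have "tripartite_path_count (x - 1) (y + 1) z - tripartite_path_count x y z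
      = 4*e*e*y + 6*e*e*z + 4*e*y*y + 12*e*y*z + 8*e*y + 2*e*z*z + 4*e*z + 4*y*y + 12*y*z + 4*y
        + 2 * (z * z - z)"
    unfolding x tripartite_path_count_def by (simp add: algebra_simps)
  moreover have "z \<le> z * z"
    using assms(3) by (cases "z = 0") (simp_all add: mult_le_cancel_left1)
  ultimately show ?thesis
    using e assms(2,3) by (smt (verit) mult_nonneg_nonneg)
qed

lemma tripartite_path_count_balanced:
  fixes a b c :: nat
  assumes "a \<le> b + 1" "b \<le> a + 1" "a \<le> c + 1" "c \<le> a + 1" "b \<le> c + 1" "c \<le> b + 1"
  defines "n \<equiv> a + b + c"
  shows "tripartite_path_count (int a) (int b) (int c)
    = tripartite_path_count (int ((n + 2) div 3)) (int ((n + 1) div 3)) (int (n div 3))"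
proof -
  define q r where "q = n div 3" and "r = n mod 3"
  have n: "n = 3 * q + r" and "r < 3"
    unfolding q_def r_def by simp_all
  then have "(n + 2) div 3 = q + (if 1 \<le> r then 1 else 0)" "(n + 1) div 3 = q + (if r = 2 then 1 else 0)"
    by auto
  moreover have "a \<in> {q, q + 1}" "b \<in> {q, q + 1}" "c \<in> {q, q + 1}"
    using assms n \<open>r < 3\<close> unfolding n_def by auto
  ultimately show ?thesis
    using n \<open>r < 3\<close> unfolding n_def q_def[symmetric]
    by (auto simp: tripartite_path_count_def algebra_simps)
qed

lemma tripartite_path_count_le_balanced:
  fixes a b c :: nat
  defines "n \<equiv> a + b + c"
  shows "tripartite_path_count (int a) (int b) (int c)
    \<le> tripartite_path_count (int ((n + 2) div 3)) (int ((n + 1) div 3)) (int (n div 3))"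
  unfolding n_def
proof (induction "a * a + b * b + c * c" arbitrary: a b c rule: less_induct)
  case less
  let ?F = "\<lambda>a b c. tripartite_path_count (int a) (int b) (int c)"
  let ?T = "\<lambda>n. tripartite_path_count (int ((n + 2) div 3)) (int ((n + 1) div 3)) (int (n div 3))"
  have move: "?F x y z \<le> ?T (a + b + c)"
    if le: "y + 2 \<le> x" and sum: "x + y + z = a + b + c"
      and squares: "x * x + y * y + z * z = a * a + b * b + c * c" for x y z
  proof -
    obtain e where x: "x = y + 2 + e"
      using le_Suc_ex[OF le] by blast
    have "?F x y z \<le> ?F (x - 1) (y + 1) z"
      using tripartite_path_count_move[of "int y" "int x" "int z"] le
      by (simp add: of_nat_diff add.commute)
    also have "\<dots> \<le> ?T ((x - 1) + (y + 1) + z)"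
      by (rule less) (use squares in \<open>simp add: x algebra_simps\<close>)
    also have "(x - 1) + (y + 1) + z = a + b + c"
      using sum le by simp
    finally show ?thesis .
  qed
  note swap = tripartite_path_count_swap
  consider (balanced) "a \<le> b + 1" "b \<le> a + 1" "a \<le> c + 1" "c \<le> a + 1" "b \<le> c + 1" "c \<le> b + 1"
    | "b + 2 \<le> a" | "a + 2 \<le> b" | "c + 2 \<le> a" | "a + 2 \<le> c" | "c + 2 \<le> b" | "b + 2 \<le> c"
    by linarith
  then show ?case
  proof cases
    case balanced
    then show ?thesis
      using tripartite_path_count_balanced by simp
  next
    case 2
    show ?thesis
      by (rule move) (use 2 in \<open>simp_all add: ac_simps\<close>)
  next
    case 3
    show ?thesis
      unfolding swap(1)[of "int a" "int b" "int c"]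
      by (rule move) (use 3 in \<open>simp_all add: ac_simps\<close>)
  next
    case 4
    show ?thesis
      unfolding swap(2)[of "int a" "int b" "int c"]
      by (rule move) (use 4 in \<open>simp_all add: ac_simps\<close>)
  next
    case 5
    show ?thesis
      unfolding swap(2)[of "int a" "int b" "int c"] swap(1)[of "int a" "int c" "int b"]
      by (rule move) (use 5 in \<open>simp_all add: ac_simps\<close>)
  next
    case 6
    show ?thesis
      unfolding swap(1)[of "int a" "int b" "int c"] swap(2)[of "int b" "int a" "int c"]
      by (rule move) (use 6 in \<open>simp_all add: ac_simps\<close>)
  next
    case 7
    show ?thesis
      unfolding swap(1)[of "int a" "int b" "int c"] swap(2)[of "int b" "int a" "int c"]
        swap(1)[of "int b" "int c" "int a"]
      by (rule move) (use 7 in \<open>simp_all add: ac_simps\<close>)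
  qed
qed

lemma mod_add_complement_eq_0_iff:
  fixes i m n :: nat
  assumes "i < m"
  shows "(n + (m - i)) mod m = 0 \<longleftrightarrow> n mod m = i"
  by (smt (verit, del_insts) add_diff_cancel_left' add_diff_cancel_right' assms
    canonically_ordered_monoid_add_class.lessE diff_diff_left
    linordered_semidom_class.add_diff_inverse mod_add_right_eq mod_if
    mod_self not_add_less2 zero_less_diff)

lemma card_residue_class:
  fixes i m n :: nat
  assumes "i < m"
  shows "card {x \<in> {0..<n}. x mod m = i} = (n + (m - 1 - i)) div m"
proof (induction n)
  case 0
  then show ?case
    using assms by simp
next
  case (Suc n)
  define k where "k = m - 1 - i"
  have "{x \<in> {0..<Suc n}. x mod m = i}
      = {x \<in> {0..<n}. x mod m = i} \<union> (if n mod m = i then {n} else {})"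
    by (auto simp: less_Suc_eq)
  then have "card {x \<in> {0..<Suc n}. x mod m = i}
      = card {x \<in> {0..<n}. x mod m = i} + (if n mod m = i then 1 else 0)"
    by simp
  moreover have "Suc (n + k) = n + (m - i)"
    using assms unfolding k_def by simp
  then have "Suc (n + k) mod m = 0 \<longleftrightarrow> n mod m = i"
    using mod_add_complement_eq_0_iff[OF assms] by presburger
  then have "Suc (n + k) div m = (n + k) div m + (if n mod m = i then 1 else 0)"
    using div_Suc[of "n + k" m] by simp
  ultimately show ?case
    using Suc.IH unfolding k_def by simp
qed

lemma path_count_tripartite_le_turan:
  fixes p :: "nat \<Rightarrow> nat"
  assumes "p ` {0..<n} \<subseteq> {..<3}"
  shows "path_count (multipartite {0..<n} p) \<le> path_count (multipartite {0..<n} (\<lambda>x. x mod 3))"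
proof -
  let ?s = "part_size {0..<n} p"
  have "int (path_count (multipartite {0..<n} p))
      = tripartite_path_count (int (?s 0)) (int (?s 1)) (int (?s 2))"
    using path_count_multipartite[OF _ assms] by simp
  also have "\<dots> \<le> tripartite_path_count (int ((n + 2) div 3)) (int ((n + 1) div 3)) (int (n div 3))"
    using tripartite_path_count_le_balanced[of "?s 0" "?s 1" "?s 2"] part_sizes_sum[OF _ assms]
    by simp
  also have "\<dots> = int (path_count (multipartite {0..<n} (\<lambda>x. x mod 3)))"
    using path_count_multipartite[of "{0..<n}" "\<lambda>x. x mod 3"] card_residue_class[of _ 3 n]
    unfolding part_size_def by (simp add: image_subset_iff)
  finally show ?thesis
    by simp
qed

lemma path_count_le_turan:
  fixes n :: nat
  assumes "graph_on {0..<n} R" and "K4_free R"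
  shows "path_count R \<le> path_count (multipartite {0..<n} (\<lambda>x. x mod 3))"
proof -
  have "finite {0..<n}"
    by simp
  then obtain R0 where R0: "graph_on {0..<n} R0" "K4_free R0" "complete_multipartite {0..<n} R0"
    and max: "\<And>S. graph_on {0..<n} S \<Longrightarrow> K4_free S \<Longrightarrow> path_count S \<le> path_count R0"
    by (rule exists_complete_multipartite_maximiser) blast
  obtain p :: "nat \<Rightarrow> nat" where "p ` {0..<n} \<subseteq> {..<3}" and "R0 = multipartite {0..<n} p"
    using graph_on.complete_multipartite_K4_free_tripartite[OF R0(1,3,2)] by blast
  then have "path_count R0 \<le> path_count (multipartite {0..<n} (\<lambda>x. x mod 3))"
    using path_count_tripartite_le_turan by blast
  with max[OF assms] show ?thesis
    by linarith
qed

section \<open>Copies of \<open>P\<^sub>4\<close> and \<open>K\<^sub>4\<close>\<close>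

definition edge_rel :: "'a set set \<Rightarrow> 'a \<Rightarrow> 'a \<Rightarrow> bool" where
  "edge_rel E x y \<longleftrightarrow> {x, y} \<in> E"

definition path_subgraph :: "'a \<times> 'a \<times> 'a \<times> 'a \<Rightarrow> 'a sgraph" where
  "path_subgraph = (\<lambda>(a, b, c, d). ({a, b, c, d}, {{a, b}, {b, c}, {c, d}}))"

definition rev4 :: "'a \<times> 'a \<times> 'a \<times> 'a \<Rightarrow> 'a \<times> 'a \<times> 'a \<times> 'a" where
  "rev4 = (\<lambda>(a, b, c, d). (d, c, b, a))"

lemma graph_on_edge_rel:
  assumes "simple_graph G"
  shows "graph_on (fst G) (edge_rel (snd G))"
proof
  show "finite (fst G)"
    using assms unfolding simple_graph_def by blast
  show "edge_rel (snd G) x y \<Longrightarrow> x \<in> fst G" for x y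
    using assms unfolding simple_graph_def edge_rel_def by blast
  show "edge_rel (snd G) x y \<Longrightarrow> edge_rel (snd G) y x" for x y
    unfolding edge_rel_def by (simp add: insert_commute)
  show "\<not> edge_rel (snd G) x x" for x
    using assms unfolding simple_graph_def edge_rel_def by fastforce
qed

lemma finite_subgraphs:
  assumes "simple_graph G"
  shows "finite (subgraphs G)"
proof -
  have "finite (fst G)" and "snd G \<subseteq> Pow (fst G)"
    using assms unfolding simple_graph_def by auto
  then have "finite (Pow (fst G) \<times> Pow (snd G))"
    by (meson finite_Pow_iff finite_SigmaI finite_subset)
  moreover have "subgraphs G \<subseteq> Pow (fst G) \<times> Pow (snd G)"
    unfolding subgraphs_def by auto
  ultimately show ?thesis
    by (rule finite_subset[rotated])
qed

lemma graph_iso_sym: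
  assumes "graph_iso G H"
  shows "graph_iso H G"
proof -
  obtain f where f: "bij_betw f (fst G) (fst H)"
    and edges: "\<forall>u\<in>fst G. \<forall>v\<in>fst G. {u, v} \<in> snd G \<longleftrightarrow> {f u, f v} \<in> snd H"
    using assms unfolding graph_iso_def by blast
  let ?g = "inv_into (fst G) f"
  have "bij_betw ?g (fst H) (fst G)"
    using f by (rule bij_betw_inv_into)
  moreover have "?g u \<in> fst G" "f (?g u) = u" if "u \<in> fst H" for u
    using f that by (auto intro: inv_into_into simp: bij_betw_def f_inv_into_f)
  ultimately show ?thesis
    unfolding graph_iso_def using edges by metis
qed

lemma graph_iso_nth:
  assumes "distinct xs" and "fst H = {0..<length xs}"
    and "\<And>i j. i < length xs \<Longrightarrow> j < length xs \<Longrightarrow> {xs ! i, xs ! j} \<in> F \<longleftrightarrow> {i, j} \<in> snd H"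
  shows "graph_iso (set xs, F) H"
proof (rule graph_iso_sym)
  show "graph_iso H (set xs, F)"
    unfolding graph_iso_def using assms
    by (intro exI[of _ "(!) xs"]) (auto intro: bij_betw_nth)
qed

lemma less_4_iff: "i < 4 \<longleftrightarrow> i \<in> {0, 1, 2, 3 :: nat}"
  by auto

lemma K4_edge_iff:
  assumes "i < 4" and "j < 4"
  shows "{i, j} \<in> snd (complete_graph 4) \<longleftrightarrow> i \<noteq> j"
  using assms unfolding complete_graph_def by (auto simp: doubleton_eq_iff)

lemma path_edges_determine_path:
  assumes "distinct [a, b, c, d]" and "distinct [a', b', c', d']"
    and "{{a', b'}, {b', c'}, {c', d'}} = {{a, b}, {b, c}, {c, d}}"
  shows "(a', b', c', d') = (a, b, c, d) \<or> (a', b', c', d') = (d, c, b, a)"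
proof -
  let ?E = "{{a, b}, {b, c}, {c, d}}"
  have inner: "x \<in> {b, c}" if "{x, y} \<in> ?E" "{x, z} \<in> ?E" "y \<noteq> z" for x y z
    using that assms(1) by (auto simp: doubleton_eq_iff)
  have nbr_b: "y \<in> {a, c}" if "{b, y} \<in> ?E" for y
    using that assms(1) by (auto simp: doubleton_eq_iff)
  have nbr_c: "y \<in> {b, d}" if "{c, y} \<in> ?E" for y
    using that assms(1) by (auto simp: doubleton_eq_iff)
  have E: "{a', b'} \<in> ?E" "{b', c'} \<in> ?E" "{c', d'} \<in> ?E"
    unfolding assms(3)[symmetric] by simp_all
  have "b' \<in> {b, c}"
    using inner[of b' a' c'] E assms(2) by (simp add: insert_commute)
  moreover have "c' \<in> {b, c}"
    using inner[of c' b' d'] E assms(2) by (simp add: insert_commute)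
  ultimately consider "b' = b" "c' = c" | "b' = c" "c' = b"
    using assms(2) by auto
  then show ?thesis
  proof cases
    case 1
    then have "a' \<in> {a, c}" "d' \<in> {b, d}"
      using nbr_b[of a'] nbr_c[of d'] E by (simp_all add: insert_commute)
    with 1 assms(2) show ?thesis
      by auto
  next
    case 2
    then have "a' \<in> {b, d}" "d' \<in> {a, c}"
      using nbr_c[of a'] nbr_b[of d'] E by (simp_all add: insert_commute)
    with 2 assms(2) show ?thesis
      by auto
  qed
qed

context
  fixes G :: "'a sgraph"
  assumes simple: "simple_graph G"
begin

interpretation graph_on "fst G" "edge_rel (snd G)"
  using graph_on_edge_rel[OF simple] .

lemma K4_copy_of_clique:
  assumes "edge_rel (snd G) a b" "edge_rel (snd G) a c" "edge_rel (snd G) a d"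
    "edge_rel (snd G) b c" "edge_rel (snd G) b d" "edge_rel (snd G) c d"
  shows "count_copies (complete_graph 4) G \<noteq> 0"
proof -
  define xs where "xs = [a, b, c, d]"
  have "distinct xs" and len: "length xs = 4"
    using assms adj_irrefl unfolding xs_def by auto
  have clique: "edge_rel (snd G) (xs ! i) (xs ! j) \<longleftrightarrow> i \<noteq> j" if "i < 4" "j < 4" for i j
    using that assms adj_irrefl adj_commute unfolding xs_def less_4_iff by auto
  let ?S = "(set xs, {e \<in> snd G. e \<subseteq> set xs})"
  have "?S \<in> subgraphs G"
    using assms adj_in_vertices adj_in_vertices' unfolding subgraphs_def xs_def by auto
  moreover have "graph_iso ?S (complete_graph 4)"
  proof (rule graph_iso_nth)
    show "{xs ! i, xs ! j} \<in> {e \<in> snd G. e \<subseteq> set xs} \<longleftrightarrow> {i, j} \<in> snd (complete_graph 4)"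
      if "i < length xs" "j < length xs" for i j
      using that clique[of i j] K4_edge_iff[of i j] nth_mem[of i xs] nth_mem[of j xs] len
      unfolding edge_rel_def by simp
  qed (use \<open>distinct xs\<close> in \<open>simp_all add: complete_graph_def xs_def eval_nat_numeral\<close>)
  ultimately show ?thesis
    using finite_subgraphs[OF simple] unfolding count_copies_def by auto
qed

lemma not_K4_free_of_K4_copy:
  assumes "S \<in> subgraphs G" and "graph_iso S (complete_graph 4)"
  shows "\<not> K4_free (edge_rel (snd G))"
proof -
  have "graph_iso (complete_graph 4) S"
    using assms(2) by (rule graph_iso_sym)
  then obtain g where edges: "\<forall>i\<in>{0..<4}. \<forall>j\<in>{0..<4}.
      {i, j} \<in> snd (complete_graph 4) \<longleftrightarrow> {g i, g j} \<in> snd S"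
    unfolding graph_iso_def by (auto simp: complete_graph_def)
  have "edge_rel (snd G) (g i) (g j)" if "i < 4" "j < 4" "i \<noteq> j" for i j
    using that edges K4_edge_iff assms(1) unfolding subgraphs_def edge_rel_def by auto
  then have "edge_rel (snd G) (g 0) (g 1)" "edge_rel (snd G) (g 0) (g 2)"
    "edge_rel (snd G) (g 0) (g 3)" "edge_rel (snd G) (g 1) (g 2)"
    "edge_rel (snd G) (g 1) (g 3)" "edge_rel (snd G) (g 2) (g 3)"
    by simp_all
  then show ?thesis
    unfolding K4_free_def by blast
qed

lemma count_K4_copies_eq_0_iff:
  "count_copies (complete_graph 4) G = 0 \<longleftrightarrow> K4_free (edge_rel (snd G))"
proof
  show "K4_free (edge_rel (snd G))" if "count_copies (complete_graph 4) G = 0"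
    using that K4_copy_of_clique unfolding K4_free_def by blast
  show "count_copies (complete_graph 4) G = 0" if "K4_free (edge_rel (snd G))"
  proof -
    have "{S \<in> subgraphs G. graph_iso S (complete_graph 4)} = {}"
      using that not_K4_free_of_K4_copy by blast
    then show ?thesis
      unfolding count_copies_def by (simp only: card.empty)
  qed
qed

lemma distinct_path:
  assumes "(a, b, c, d) \<in> paths4 (edge_rel (snd G))"
  shows "distinct [a, b, c, d]"
  using assms adj_irrefl unfolding paths4_def by auto

lemma path_subgraph_copy:
  assumes "t \<in> paths4 (edge_rel (snd G))"
  shows "path_subgraph t \<in> subgraphs G" and "graph_iso (path_subgraph t) P4"
proof -
  obtain a b c d where t: "t = (a, b, c, d)"
    by (cases t) auto
  with assms have path: "(a, b, c, d) \<in> paths4 (edge_rel (snd G))"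
    by simp
  then have edges: "{a, b} \<in> snd G" "{b, c} \<in> snd G" "{c, d} \<in> snd G"
    unfolding paths4_def edge_rel_def by simp_all
  have dist: "distinct [a, b, c, d]"
    using path by (rule distinct_path)
  show "path_subgraph t \<in> subgraphs G"
    using simple edges unfolding t path_subgraph_def subgraphs_def simple_graph_def by auto
  have "graph_iso (set [a, b, c, d], {{a, b}, {b, c}, {c, d}}) P4"
  proof (rule graph_iso_nth)
    fix i j
    assume "i < length [a, b, c, d]" "j < length [a, b, c, d]"
    then have "i \<in> {0, 1, 2, 3}" "j \<in> {0, 1, 2, 3}"
      by auto
    then show "{[a, b, c, d] ! i, [a, b, c, d] ! j} \<in> {{a, b}, {b, c}, {c, d}} \<longleftrightarrow> {i, j} \<in> snd P4"
      using dist by (elim insertE emptyE) (auto simp: P4_def doubleton_eq_iff)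
  qed (use dist in \<open>auto simp: P4_def\<close>)
  then show "graph_iso (path_subgraph t) P4"
    unfolding t path_subgraph_def by simp
qed

lemma path_subgraph_fibre:
  assumes "t \<in> paths4 (edge_rel (snd G))"
  shows "{t' \<in> paths4 (edge_rel (snd G)). path_subgraph t' = path_subgraph t} = {t, rev4 t}"
    and "rev4 t \<noteq> t"
proof -
  obtain a b c d where t: "t = (a, b, c, d)"
    by (cases t) auto
  have dist: "distinct [a, b, c, d]"
    using assms distinct_path unfolding t by blast
  then show "rev4 t \<noteq> t"
    unfolding t rev4_def by auto
  have "rev4 t \<in> paths4 (edge_rel (snd G))" "path_subgraph (rev4 t) = path_subgraph t"
    using assms adj_commute unfolding t rev4_def paths4_def path_subgraph_def
    by (auto simp: insert_commute)
  moreover have "t' = t \<or> t' = rev4 t"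
    if "t' \<in> paths4 (edge_rel (snd G))" "path_subgraph t' = path_subgraph t" for t'
  proof -
    obtain a' b' c' d' where t': "t' = (a', b', c', d')"
      by (cases t') auto
    show ?thesis
      using path_edges_determine_path[OF dist distinct_path] that
      unfolding t t' rev4_def path_subgraph_def by auto
  qed
  ultimately show "{t' \<in> paths4 (edge_rel (snd G)). path_subgraph t' = path_subgraph t} = {t, rev4 t}"
    using assms by blast
qed

lemma P4_copy_is_path_subgraph:
  assumes "S \<in> subgraphs G" and "graph_iso S P4"
  obtains t where "t \<in> paths4 (edge_rel (snd G))" and "path_subgraph t = S"
proof -
  obtain W F where S: "S = (W, F)"
    by (cases S)
  have "graph_iso P4 S"
    using assms(2) by (rule graph_iso_sym)
  then obtain g :: "nat \<Rightarrow> 'a" where g: "bij_betw g (fst P4) (fst S)"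
    and iso: "\<forall>i\<in>fst P4. \<forall>j\<in>fst P4. {i, j} \<in> snd P4 \<longleftrightarrow> {g i, g j} \<in> snd S"
    unfolding graph_iso_def by blast
  have P4: "fst P4 = {0, 1, 2, 3}" "snd P4 = {{0, 1}, {1, 2}, {2, 3}}"
    unfolding P4_def by simp_all
  define t where "t = (g 0, g 1, g 2, g 3)"
  have W: "W = {g 0, g 1, g 2, g 3}"
    using bij_betw_imp_surj_on[OF g] unfolding P4 S by auto
  have "distinct (map g [0, 1, 2, 3])"
    using bij_betw_imp_inj_on[OF g] unfolding P4 by (simp add: distinct_map)
  then have dist: "distinct [g 0, g 1, g 2, g 3]"
    by simp
  have in_F: "{g 0, g 1} \<in> F" "{g 1, g 2} \<in> F" "{g 2, g 3} \<in> F"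
    using iso unfolding P4 S by simp_all
  have F_sub: "F \<subseteq> snd G" and F_W: "\<forall>e\<in>F. e \<subseteq> W"
    using assms(1) unfolding S subgraphs_def by auto
  have "F \<subseteq> {{g 0, g 1}, {g 1, g 2}, {g 2, g 3}}"
  proof
    fix e
    assume "e \<in> F"
    then have "card e = 2" "e \<subseteq> W"
      using F_sub F_W simple unfolding simple_graph_def by auto
    then obtain x y where e: "e = {x, y}" and "x \<in> W" "y \<in> W"
      by (auto simp: card_2_iff)
    then obtain i j :: nat where ij: "i \<in> {0, 1, 2, 3}" "j \<in> {0, 1, 2, 3}" and "x = g i" "y = g j"
      unfolding W by blast
    then have "{i, j} \<in> snd P4 \<longleftrightarrow> {g i, g j} \<in> snd S"
      using iso unfolding P4(1) by blast
    with \<open>e \<in> F\<close> have "{i, j} \<in> {{0, 1}, {1, 2}, {2, 3 :: nat}}"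
      unfolding e \<open>x = g i\<close> \<open>y = g j\<close> P4(2) S by simp
    then show "e \<in> {{g 0, g 1}, {g 1, g 2}, {g 2, g 3}}"
      unfolding e \<open>x = g i\<close> \<open>y = g j\<close> by (auto simp: doubleton_eq_iff)
  qed
  with in_F have "F = {{g 0, g 1}, {g 1, g 2}, {g 2, g 3}}"
    by blast
  then have "path_subgraph t = S"
    unfolding t_def path_subgraph_def S W by simp
  moreover have "t \<in> paths4 (edge_rel (snd G))"
    using in_F F_sub dist unfolding t_def paths4_def edge_rel_def by auto
  ultimately show ?thesis
    using that by blast
qed

lemma path_count_eq_twice_P4_copies:
  "path_count (edge_rel (snd G)) = 2 * count_copies P4 G"
proof -
  let ?C = "{S \<in> subgraphs G. graph_iso S P4}"
  have "path_subgraph ` paths4 (edge_rel (snd G)) \<subseteq> ?C"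
    using path_subgraph_copy by blast
  then have "path_count (edge_rel (snd G))
      = (\<Sum>S\<in>?C. card {t \<in> paths4 (edge_rel (snd G)). path_subgraph t = S})"
    using sum_fun_comp[OF finite_paths4 _, of ?C path_subgraph "\<lambda>_. 1 :: nat"]
      finite_subgraphs[OF simple]
    unfolding path_count_def card_eq_sum[of "paths4 (edge_rel (snd G))"] by simp
  also have "\<dots> = (\<Sum>S\<in>?C. 2)"
  proof (rule sum.cong[OF refl])
    fix S
    assume "S \<in> ?C"
    then obtain t where t: "t \<in> paths4 (edge_rel (snd G))" and "path_subgraph t = S"
      using P4_copy_is_path_subgraph by blast
    then have "{t' \<in> paths4 (edge_rel (snd G)). path_subgraph t' = S} = {t, rev4 t}"
      using path_subgraph_fibre(1)[OF t] by simp
    then show "card {t \<in> paths4 (edge_rel (snd G)). path_subgraph t = S} = 2"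
      using path_subgraph_fibre(2)[OF t] by simp
  qed
  finally show ?thesis
    unfolding count_copies_def by simp
qed

end

section \<open>The Tur\'an graph\<close>

lemma edge_rel_turan: "edge_rel (snd (turan_graph 3 n)) = multipartite {0..<n} (\<lambda>x. x mod 3)"
  unfolding edge_rel_def turan_graph_def multipartite_def by (auto simp: fun_eq_iff doubleton_eq_iff)

lemma simple_turan: "simple_graph (turan_graph 3 n)"
  unfolding simple_graph_def turan_graph_def by (auto simp: card_insert_if)

lemma no_K4_copies_turan: "count_copies (complete_graph 4) (turan_graph 3 n) = 0"
  using count_K4_copies_eq_0_iff[OF simple_turan] K4_free_tripartite[of "\<lambda>x. x mod 3" "{0..<n}"]
  unfolding edge_rel_turan by (auto simp: image_subset_iff)

lemma count_P4_le_turan: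
  assumes "simple_graph G" and "fst G = {0..<n}" and "count_copies (complete_graph 4) G = 0"
  shows "count_copies P4 G \<le> count_copies P4 (turan_graph 3 n)"
proof -
  have "2 * count_copies P4 G = path_count (edge_rel (snd G))"
    using path_count_eq_twice_P4_copies[OF assms(1)] by simp
  also have "\<dots> \<le> path_count (edge_rel (snd (turan_graph 3 n)))"
    using path_count_le_turan graph_on_edge_rel[OF assms(1)]
      count_K4_copies_eq_0_iff[OF assms(1)] assms(2,3)
    unfolding edge_rel_turan by simp
  also have "\<dots> = 2 * count_copies P4 (turan_graph 3 n)"
    using path_count_eq_twice_P4_copies[OF simple_turan] .
  finally show ?thesis
    by simp
qed

lemma gen_ex_P4_K4: "gen_ex n P4 (complete_graph 4) = count_copies P4 (turan_graph 3 n)"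
proof -
  let ?A = "{count_copies P4 G | G :: nat sgraph.
      simple_graph G \<and> fst G = {0..<n} \<and> count_copies (complete_graph 4) G = 0}"
  have le: "k \<le> count_copies P4 (turan_graph 3 n)" if "k \<in> ?A" for k
    using that count_P4_le_turan by blast
  have "fst (turan_graph 3 n) = {0..<n}"
    by (simp add: turan_graph_def)
  then have "count_copies P4 (turan_graph 3 n) \<in> ?A"
    using simple_turan no_K4_copies_turan by blast
  moreover have "finite ?A"
    using le by (meson finite_nat_set_iff_bounded_le)
  ultimately show ?thesis
    unfolding gen_ex_def using le by (intro Max_eqI) auto
qed

theorem proposition3p16:
  shows "\<exists>n0. \<forall>n\<ge>n0. gen_ex n P4 (complete_graph 4) = count_copies P4 (turan_graph 3 n)"
  using gen_ex_P4_K4 by blast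

end
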